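(* Let $f : \widehat{\mathbb{Z}} \to \widehat{\mathbb{Z}}$ be congruence preserving and $p$ a prime number. The following are equivalent: (i) $\lambda_f(p) \ne p$. (ii) The reduction $f_p : \mathbb{Z}/p\mathbb{Z} \to \mathbb{Z}/p\mathbb{Z}$ is not a cyclic permutation of length $p$. (iii) For every $x \in \mathbb{Z}/p\mathbb{Z}$, the cycle length $l_x$ of $f_p$ on $x$ satisfies $l_x < p$. (iv) $\alpha(\lambda_f(p)) < p$.
   Context: $\widehat{\mathbb{Z}} = \varprojlim_n \mathbb{Z}/n\mathbb{Z}$; $s\equiv_n t$ means $s-t\in n\widehat{\mathbb{Z}}$. A continuous $f$ is congruence preserving if $s\equiv_n t$ implies $f(s)\equiv_n f(t)$ for all $s,t\in\widehat{\mathbb{Z}}$, $n\ge1$; it then induces reductions $f_n:\mathbb{Z}/n\mathbb{Z}\to\mathbb{Z}/n\mathbb{Z}$. For $x \in \mathbb{Z}/n\mathbb{Z}$, the cycle length $l_x$ of $f_n$ on $x$ is the least $l\ge1$ such that $f_n^k(x)=f_n^{k+l}(x)$ for some $k\ge0$; $\lambda_f(n)$, the period of $f_n$, is the least common multiple of all $l_x$. A cyclic permutation of length $p$ means a permutation of $\mathbb{Z}/p\mathbb{Z}$ consisting of a single cycle through all $p$ elements. $\alpha(m)$ denotes the largest prime-power divisor of the positive integer $m$ (with $\alpha(1)=1$). *)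

theory Defs
  imports "HOL-Number_Theory.Number_Theory"
begin

text \<open>The profinite integers as the inverse limit of the rings Z/nZ (n >= 1):
  compatible families of residues x n in {0..<n}; the unused index 0 is fixed to 0.\<close>

definition zhat_set :: "(nat \<Rightarrow> int) set" where
  "zhat_set = {x. x 0 = 0 \<and> (\<forall>n>0. 0 \<le> x n \<and> x n < int n \<and>
                    (\<forall>m>0. n dvd m \<longrightarrow> x m mod int n = x n))}"

typedef zhat = zhat_set
  by (rule exI[of _ "\<lambda>_. 0"]) (simp add: zhat_set_def)

definition zhat_minus :: "zhat \<Rightarrow> zhat \<Rightarrow> zhat" where
  "zhat_minus s t = Abs_zhat (\<lambda>k. (Rep_zhat s k - Rep_zhat t k) mod int k)"

definition zhat_scale :: "nat \<Rightarrow> zhat \<Rightarrow> zhat" where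
  "zhat_scale n u = Abs_zhat (\<lambda>k. (int n * Rep_zhat u k) mod int k)"

definition zhat_of_int :: "int \<Rightarrow> zhat" where
  "zhat_of_int a = Abs_zhat (\<lambda>k. if k = 0 then 0 else a mod int k)"

definition zhat_cong :: "nat \<Rightarrow> zhat \<Rightarrow> zhat \<Rightarrow> bool" where
  "zhat_cong n s t \<longleftrightarrow> (\<exists>u. zhat_minus s t = zhat_scale n u)"

text \<open>Continuity w.r.t. the profinite topology (basic open sets are the classes mod n).\<close>
definition zhat_continuous :: "(zhat \<Rightarrow> zhat) \<Rightarrow> bool" where
  "zhat_continuous f \<longleftrightarrow>
     (\<forall>s n. n \<ge> 1 \<longrightarrow> (\<exists>m\<ge>1. \<forall>t. zhat_cong m t s \<longrightarrow> zhat_cong n (f t) (f s)))"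

definition cong_preserving :: "(zhat \<Rightarrow> zhat) \<Rightarrow> bool" where
  "cong_preserving f \<longleftrightarrow>
     (\<forall>n s t. n \<ge> 1 \<longrightarrow> zhat_cong n s t \<longrightarrow> zhat_cong n (f s) (f t))"

text \<open>Reduction f_n : Z/nZ \<rightarrow> Z/nZ, with Z/nZ represented as {0..<n}.\<close>
definition reduction :: "(zhat \<Rightarrow> zhat) \<Rightarrow> nat \<Rightarrow> nat \<Rightarrow> nat" where
  "reduction f n x = nat (Rep_zhat (f (zhat_of_int (int x))) n)"

definition cycle_len :: "(nat \<Rightarrow> nat) \<Rightarrow> nat \<Rightarrow> nat" where
  "cycle_len g x = (LEAST l. l \<ge> 1 \<and> (\<exists>k. (g ^^ k) x = (g ^^ (k + l)) x))"

definition period :: "(zhat \<Rightarrow> zhat) \<Rightarrow> nat \<Rightarrow> nat" where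
  "period f n = Lcm ((cycle_len (reduction f n)) ` {0..<n})"

definition cyclic_perm :: "(nat \<Rightarrow> nat) \<Rightarrow> nat \<Rightarrow> bool" where
  "cyclic_perm g p \<longleftrightarrow> bij_betw g {0..<p} {0..<p} \<and>
     (\<forall>x\<in>{0..<p}. \<forall>y\<in>{0..<p}. \<exists>k. (g ^^ k) x = y)"

definition alpha :: "nat \<Rightarrow> nat" where
  "alpha m = Max {q. q dvd m \<and> (q = 1 \<or> primepow q)}"

end

theory Submission
  imports Defs
begin

(* The reduction f_p is a self-map of the p-element set Z/pZ, so every cycle length l_x is at
   most p, and l_x = p exactly when the first p iterates of x exhaust Z/pZ, which forces f_p to
   be a single p-cycle. If f_p is a p-cycle, all l_x equal p, so lambda_f(p) = p = alpha(p).
   Otherwise all l_x are < p; a prime power dividing their lcm divides one of them. *)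

lemma funpow_in_set:
  assumes "g ` A \<subseteq> A" "x \<in> A"
  shows "(g ^^ n) x \<in> A"
  using assms by (induction n) auto

lemma cycle_len_le:
  assumes "l \<ge> 1" "(g ^^ k) x = (g ^^ (k + l)) x"
  shows "cycle_len g x \<le> l"
  unfolding cycle_len_def using assms by (intro Least_le) blast

lemma cycle_len_LeastI:
  assumes "l \<ge> 1" "(g ^^ k) x = (g ^^ (k + l)) x"
  shows "cycle_len g x \<ge> 1" "\<exists>k. (g ^^ k) x = (g ^^ (k + cycle_len g x)) x"
  using LeastI[of "\<lambda>l. l \<ge> 1 \<and> (\<exists>k. (g ^^ k) x = (g ^^ (k + l)) x)" l] assms
  unfolding cycle_len_def by blast+

lemma funpow_collision:
  assumes "finite A" "g ` A \<subseteq> A" "x \<in> A"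
  obtains k l where "l \<ge> 1" "k + l \<le> card A" "(g ^^ k) x = (g ^^ (k + l)) x"
proof -
  let ?orb = "\<lambda>n. (g ^^ n) x"
  have "?orb ` {0..card A} \<subseteq> A"
    using funpow_in_set[OF assms(2,3)] by blast
  then have "card (?orb ` {0..card A}) \<le> card A"
    by (rule card_mono[OF assms(1)])
  then have "\<not> inj_on ?orb {0..card A}"
    by (auto dest: card_image)
  then obtain i j where "i \<in> {0..card A}" "j \<in> {0..card A}" "i < j" "?orb i = ?orb j"
    using linorder_inj_onI'[of "{0..card A}" ?orb] by blast
  then show thesis
    using that[of "j - i" i] by simp
qed

lemma cycle_len_bounds:
  assumes "finite A" "g ` A \<subseteq> A" "x \<in> A"
  shows "1 \<le> cycle_len g x" "cycle_len g x \<le> card A"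
proof -
  obtain k l where "l \<ge> 1" "k + l \<le> card A" "(g ^^ k) x = (g ^^ (k + l)) x"
    using funpow_collision[OF assms] .
  then show "1 \<le> cycle_len g x" "cycle_len g x \<le> card A"
    using cycle_len_LeastI(1) cycle_len_le by fastforce+
qed

lemma cycle_len_repeats:
  assumes "finite A" "g ` A \<subseteq> A" "x \<in> A"
  shows "\<exists>k. (g ^^ k) x = (g ^^ (k + cycle_len g x)) x"
  using funpow_collision[OF assms] cycle_len_LeastI(2) by metis

lemma inj_on_funpow_below_cycle_len:
  "inj_on (\<lambda>n. (g ^^ n) x) {..<cycle_len g x}"
proof (rule linorder_inj_onI')
  fix i j
  assume j: "j \<in> {..<cycle_len g x}" and "i < j"
  show "(g ^^ i) x \<noteq> (g ^^ j) x"
  proof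
    assume "(g ^^ i) x = (g ^^ j) x"
    then have "cycle_len g x \<le> j - i"
      using \<open>i < j\<close> by (intro cycle_len_le[where k = i]) simp_all
    with j show False
      by simp
  qed
qed

context
  fixes g :: "nat \<Rightarrow> nat" and A :: "nat set" and x :: nat
  assumes finite: "finite A" and maps: "g ` A \<subseteq> A" and x: "x \<in> A"
    and full: "cycle_len g x = card A"
begin

lemma orbit_eq_if_cycle_len_eq_card:
  "(\<lambda>n. (g ^^ n) x) ` {..<card A} = A"
proof (rule card_subset_eq[OF finite])
  show "(\<lambda>n. (g ^^ n) x) ` {..<card A} \<subseteq> A"
    using funpow_in_set[OF maps x] by auto
  show "card ((\<lambda>n. (g ^^ n) x) ` {..<card A}) = card A"
    using inj_on_funpow_below_cycle_len[of g x] full by (simp add: card_image)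
qed

lemma funpow_card_eq_if_cycle_len_eq_card:
  "(g ^^ card A) x = x"
proof -
  obtain j where j: "j < card A" "(g ^^ card A) x = (g ^^ j) x"
    using funpow_in_set[OF maps x, of "card A"] orbit_eq_if_cycle_len_eq_card by force
  have "j = 0"
  proof (rule ccontr)
    assume "j \<noteq> 0"
    then have "cycle_len g x \<le> card A - j"
      using j by (intro cycle_len_le[where k = j]) simp_all
    with \<open>j \<noteq> 0\<close> j(1) full show False
      by linarith
  qed
  with j show ?thesis
    by simp
qed

end

lemma cyclic_perm_if_cycle_len_eq:
  assumes maps: "g ` {0..<p} \<subseteq> {0..<p}" and x: "x < p" and full: "cycle_len g x = p"
  shows "cyclic_perm g p"
proof -
  let ?A = "{0..<p}"
  have card: "cycle_len g x = card ?A"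
    using full by simp
  have orbit: "(\<lambda>n. (g ^^ n) x) ` {..<p} = ?A"
    using orbit_eq_if_cycle_len_eq_card[OF _ maps _ card] x by simp
  have periodic: "(g ^^ (i + p)) x = (g ^^ i) x" if "i < p" for i
  proof -
    have "(g ^^ p) x = x"
      using funpow_card_eq_if_cycle_len_eq_card[OF _ maps _ card] x by simp
    then have "(g ^^ ((i + p) mod p)) x = (g ^^ (i + p)) x"
      by (rule funpow_mod_eq)
    with that show ?thesis
      by simp
  qed
  have "?A \<subseteq> g ` ?A"
  proof
    fix y assume "y \<in> ?A"
    then obtain i where i: "i < p" "y = (g ^^ i) x"
      unfolding orbit[symmetric] by blast
    then have "y = (g ^^ Suc (i + p - 1)) x"
      using periodic[of i] by simp
    then have "y = g ((g ^^ (i + p - 1)) x)"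
      by simp
    then show "y \<in> g ` ?A"
      using funpow_in_set[OF maps, of x] x by auto
  qed
  then have bij: "bij_betw g ?A ?A"
    using maps finite_surj_inj[of ?A g] by (simp add: bij_betw_def subset_antisym)
  have "\<exists>k. (g ^^ k) y = z" if yz: "y \<in> ?A" "z \<in> ?A" for y z
  proof -
    obtain i j where ij: "i < p" "y = (g ^^ i) x" "j < p" "z = (g ^^ j) x"
      using yz unfolding orbit[symmetric] by blast
    have "(g ^^ (j + p - i)) y = (g ^^ (j + p - i + i)) x"
      using ij(2) by (simp add: funpow_add)
    also have "\<dots> = z"
      using ij periodic[of j] by simp
    finally show ?thesis ..
  qed
  with bij show ?thesis
    unfolding cyclic_perm_def by blast
qed

lemma cycle_len_if_cyclic_perm:
  assumes cyc: "cyclic_perm g p" and x: "x < p"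
  shows "cycle_len g x = p"
proof -
  let ?A = "{0..<p}" and ?l = "cycle_len g x"
  have bij: "bij_betw g ?A ?A" and reach: "\<And>y z. y \<in> ?A \<Longrightarrow> z \<in> ?A \<Longrightarrow> \<exists>k. (g ^^ k) y = z"
    using cyc unfolding cyclic_perm_def by blast+
  have maps: "g ` ?A \<subseteq> ?A"
    using bij by (simp add: bij_betw_def)
  have l_pos: "?l \<ge> 1" and l_le: "?l \<le> p"
    using cycle_len_bounds[OF _ maps] x by auto
  obtain k where "(g ^^ k) x = (g ^^ (k + ?l)) x"
    using cycle_len_repeats[OF _ maps, of x] x by auto
  then have "(g ^^ k) x = (g ^^ k) ((g ^^ ?l) x)"
    by (simp add: funpow_add)
  moreover have "inj_on (g ^^ k) ?A"
    using bij_betw_funpow[OF bij] bij_betw_imp_inj_on by blast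
  ultimately have periodic: "(g ^^ ?l) x = x"
    using funpow_in_set[OF maps, of x ?l] x by (auto dest: inj_onD)
  have "?A \<subseteq> (\<lambda>i. (g ^^ i) x) ` {..<?l}"
  proof
    fix y assume "y \<in> ?A"
    then obtain n where "(g ^^ n) x = y"
      using reach x by force
    then have "y = (g ^^ (n mod ?l)) x"
      using funpow_mod_eq[OF periodic] by simp
    then show "y \<in> (\<lambda>i. (g ^^ i) x) ` {..<?l}"
      using l_pos by auto
  qed
  then have "card ?A \<le> card ((\<lambda>i. (g ^^ i) x) ` {..<?l})"
    by (intro card_mono) simp_all
  also have "\<dots> \<le> ?l"
    using card_image_le[of "{..<?l}" "\<lambda>i. (g ^^ i) x"] by simp
  finally show ?thesis
    using l_le by simp
qed

lemma Lcm_cycle_len_if_cyclic_perm: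
  assumes "cyclic_perm g p" "p > 0"
  shows "Lcm (cycle_len g ` {0..<p}) = p"
proof -
  have "cycle_len g ` {0..<p} = (\<lambda>_. p) ` {0..<p}"
    using cycle_len_if_cyclic_perm[OF assms(1)] by (intro image_cong) auto
  also have "\<dots> = {p}"
    using assms(2) by auto
  finally show ?thesis
    by simp
qed

lemma cycle_len_less_if_not_cyclic_perm:
  assumes maps: "g ` {0..<p} \<subseteq> {0..<p}" and "\<not> cyclic_perm g p" "x < p"
  shows "cycle_len g x < p"
proof -
  have "cycle_len g x \<noteq> p"
    using cyclic_perm_if_cycle_len_eq[OF maps] assms(2,3) by blast
  moreover have "cycle_len g x \<le> p"
    using cycle_len_bounds[OF _ maps, of x] assms(3) by simp
  ultimately show ?thesis
    by simp
qed

lemma primepow_dvd_lcm: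
  fixes q a b :: nat
  assumes "primepow q" "q dvd lcm a b"
  shows "q dvd a \<or> q dvd b"
proof (cases "a = 0 \<or> b = 0")
  case False
  obtain r k where r: "prime r" "k > 0" "q = r ^ k"
    using assms(1) unfolding primepow_def by blast
  have "\<not> is_unit r"
    using r(1) not_prime_unit by blast
  then have "k \<le> multiplicity r (lcm a b)"
    using assms(2) r(3) False by (simp add: power_dvd_iff_le_multiplicity)
  also have "\<dots> = max (multiplicity r a) (multiplicity r b)"
    using False multiplicity_lcm[of a b r] r(1) by simp
  finally have "k \<le> multiplicity r a \<or> k \<le> multiplicity r b"
    by (simp add: le_max_iff_disj)
  then show ?thesis
    using r(3) False \<open>\<not> is_unit r\<close> by (auto simp: power_dvd_iff_le_multiplicity)
qed auto

lemma primepow_dvd_Lcm: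
  fixes C :: "nat set"
  assumes "finite C" "primepow q" "q dvd Lcm C"
  shows "\<exists>c\<in>C. q dvd c"
  using assms
proof (induction C rule: finite_induct)
  case empty
  then show ?case
    using primepow_gt_Suc_0 by fastforce
next
  case (insert a C)
  then show ?case
    using primepow_dvd_lcm[of q a "Lcm C"] by auto
qed

lemma alpha_eq_Max_primepow_factors:
  "alpha m = Max (insert 1 (primepow_factors m))"
  unfolding alpha_def primepow_factors_def by (rule arg_cong[where f = Max]) auto

lemma primepow_le_alpha:
  assumes "m \<noteq> 0" "primepow q" "q dvd m"
  shows "q \<le> alpha m"
  using assms finite_primepow_factors[of m]
  unfolding alpha_eq_Max_primepow_factors by (simp add: primepow_factors_def)

lemma alpha_Lcm_le:
  fixes C :: "nat set"
  assumes "finite C" "0 \<notin> C" "\<forall>c\<in>C. c \<le> b" "1 \<le> b"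
  shows "alpha (Lcm C) \<le> b"
proof -
  have "Lcm C \<noteq> 0"
    using assms(1,2) by simp
  then have "alpha (Lcm C) \<in> insert 1 (primepow_factors (Lcm C))"
    unfolding alpha_eq_Max_primepow_factors by (intro Max_in) (simp_all add: finite_primepow_factors)
  then consider "alpha (Lcm C) = 1" | "primepow (alpha (Lcm C))" "alpha (Lcm C) dvd Lcm C"
    unfolding primepow_factors_def by blast
  then show ?thesis
  proof cases
    case 1
    with assms(4) show ?thesis
      by simp
  next
    case 2
    then obtain c where c: "c \<in> C" "alpha (Lcm C) dvd c"
      using primepow_dvd_Lcm[OF assms(1)] by blast
    with assms(2) have "alpha (Lcm C) \<le> c"
      by (intro dvd_imp_le) (auto intro: gr0I)
    with c(1) assms(3) show ?thesis
      by (meson le_trans)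
  qed
qed

lemma alpha_Lcm_cycle_len_less:
  assumes maps: "g ` {0..<p} \<subseteq> {0..<p}" and short: "\<forall>x<p. cycle_len g x < p" and "p > 0"
  shows "alpha (Lcm (cycle_len g ` {0..<p})) < p"
proof -
  have "1 \<le> cycle_len g 0" "cycle_len g 0 < p"
    using cycle_len_bounds(1)[OF _ maps, of 0] short \<open>p > 0\<close> by simp_all
  moreover have "0 \<notin> cycle_len g ` {0..<p}"
    using cycle_len_bounds(1)[OF _ maps] by fastforce
  ultimately have "alpha (Lcm (cycle_len g ` {0..<p})) \<le> p - 1"
    using short by (intro alpha_Lcm_le) auto
  with \<open>p > 0\<close> show ?thesis
    by simp
qed

lemma reduction_less:
  assumes "n > 0"
  shows "reduction f n x < n"
proof -
  define v where "v = Rep_zhat (f (zhat_of_int (int x)))"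
  have "v \<in> zhat_set"
    unfolding v_def by (rule Rep_zhat)
  then have "0 \<le> v n \<and> v n < int n"
    using assms unfolding zhat_set_def by blast
  then show ?thesis
    unfolding reduction_def v_def[symmetric] by (simp add: nat_less_iff)
qed

theorem lemma3p10:
  fixes f :: "zhat \<Rightarrow> zhat" and p :: nat
  assumes "zhat_continuous f" and "cong_preserving f" and "prime p"
  shows "(period f p \<noteq> p \<longleftrightarrow> \<not> cyclic_perm (reduction f p) p)
       \<and> (\<not> cyclic_perm (reduction f p) p \<longleftrightarrow> (\<forall>x\<in>{0..<p}. cycle_len (reduction f p) x < p))
       \<and> ((\<forall>x\<in>{0..<p}. cycle_len (reduction f p) x < p) \<longleftrightarrow> alpha (period f p) < p)"
proof -
  let ?g = "reduction f p"
  have p_gt_1: "p > 1"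
    using assms(3) prime_gt_1_nat by blast
  have maps: "?g ` {0..<p} \<subseteq> {0..<p}"
    using reduction_less[of p f] p_gt_1 by auto
  have period: "period f p = Lcm (cycle_len ?g ` {0..<p})"
    unfolding period_def ..
  have alpha_p: "p \<le> alpha p"
    using primepow_le_alpha[of p p] assms(3) p_gt_1 by simp
  show ?thesis
  proof (cases "cyclic_perm ?g p")
    case True
    then have "period f p = p"
      using Lcm_cycle_len_if_cyclic_perm p_gt_1 by (simp add: period)
    moreover have "\<exists>x\<in>{0..<p}. \<not> cycle_len ?g x < p"
      using cycle_len_if_cyclic_perm[OF True] p_gt_1 by (intro bexI[of _ 0]) simp_all
    ultimately show ?thesis
      using True alpha_p by auto
  next
    case False
    then have short: "\<forall>x<p. cycle_len ?g x < p"
      using cycle_len_less_if_not_cyclic_perm[OF maps] by blast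
    then have "alpha (period f p) < p"
      using alpha_Lcm_cycle_len_less[OF maps] p_gt_1 by (simp add: period)
    with False short alpha_p show ?thesis
      by auto
  qed
qed

end
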